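(* Let $\langle \mathcal{N},\mathcal{S},\mathcal{A},P,r,\gamma\rangle$ be a Markov game as described in the context. Let $G_d=(\mathcal{N},\mathcal{E}_d)$ be a directed acyclic graph whose vertex labels follow a topological order, and let $\pi$ be a (possibly stochastic) joint policy associated with $G_d$ that is $G_d$-locally optimal. Let $G_c=(\mathcal{N},\mathcal{E}_c)$ be a coordination graph of the state-action value function $Q^{\pi}$. If $$N_d(i)=N_c(i^{[+]})\quad\text{for all } i\in\mathcal{N},$$ then $\pi$ is globally optimal, i.e. $V^{\pi}(s)=V^*(s)$ for all $s\in\mathcal{S}$.
   Context: A Markov game is a tuple $\langle \mathcal{N},\mathcal{S},\mathcal{A},P,r,\gamma\rangle$ with agents $\mathcal{N}=\{1,\dots,n\}$, finite state space $\mathcal{S}$, joint action space $\mathcal{A}=\prod_{i=1}^n\mathcal{A}_i$ with each $\mathcal{A}_i$ finite, transition kernel $P(s'|s,a)$, reward $r:\mathcal{S}\times\mathcal{A}\to\mathbb{R}$ and discount $\gamma\in[0,1)$. For a joint policy $\pi$ (mapping states to distributions over $\mathcal{A}$), $V^{\pi}(s)=\mathbb{E}[\sum_{t\ge0}\gamma^t r(s^t,a^t)\mid s^0=s]$ with $a^t\sim\pi(\cdot|s^t)$, $Q^{\pi}(s,a)$ is the same expectation conditioned additionally on $a^0=a$, and $V^*=\max_\pi V^\pi$ is the optimal value function (the unique fixed point of $TV(s)=\max_a[r(s,a)+\gamma\sum_{s'}P(s'|s,a)V(s')]$). Notation: for $S\subseteq\mathcal{N}$, $-S=\mathcal{N}\setminus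 S$, $-i=-\{i\}$, $a_S=(a_j)_{j\in S}$, $\mathcal{A}_S=\prod_{j\in S}\mathcal{A}_j$; $i^-=\{1,\dots,i-1\}$, $i^+=\{i+1,\dots,n\}$, $i^{[+]}=\{i,\dots,n\}$. Coordination graph (CG): an undirected graph $G_c=(\mathcal{N},\mathcal{E}_c)$ is a CG of a function $Q:\mathcal{S}\times\mathcal{A}\to\mathbb{R}$ if there exist functions $Q_{ij}:\mathcal{S}\times\mathcal{A}_i\times\mathcal{A}_j\to\mathbb{R}$ for each edge $(i,j)\in\mathcal{E}_c$ and $Q_i:\mathcal{S}\times\mathcal{A}_i\to\mathbb{R}$ for each $i\in\mathcal{N}$ such that $Q(s,a)=\sum_{i}Q_i(s,a_i)+\sum_{(i,j)\in\mathcal{E}_c}Q_{ij}(s,a_i,a_j)$. (The paper assumes w.l.o.g. $G_c$ connected, so that $Q(s,a)=\sum_{(i,j)\in\mathcal{E}_c}Q_{ij}(s,a_i,a_j)$.) $N_c(i)$ denotes the neighbors of $i$ in $G_c$, and for $S\subseteq\mathcal{N}$, $N_c(S)=(\bigcup_{i\in S}N_c(i))\setminus S$. Action dependency graph (ADG): a directed acyclic graph $G_d=(\mathcal{N},\mathcal{E}_d)$; $N_d(i)=\{j:(j,i)\in\mathcal{E}_d\}$ and $N_d[i]=N_d(i)\cup\{i\}$. Agents are indexed in a topological order, i.e. $j<i$ for all $j\in N_d(i)$. A joint policy $\pi$ is associated with $G_d$ if $\pi(a|s)=\prod_{i=1}^n\pi_i(a_i|s,a_{N_d(i)})$ with individual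 policies $\pi_i:\mathcal{S}\times\mathcal{A}_{N_d(i)}\to\Delta(\mathcal{A}_i)$. Expectation convention: for fixed $s$ and a fixed partial action $a_{N_d(i)}$, $\mathbb{E}_{\pi'_i,\pi_{-N_d[i]}}[\cdot]$ denotes the expectation when the remaining actions $a_j$, $j\notin N_d(i)$, are drawn in increasing order of index, $a_j\sim\pi_j(\cdot|s,a_{N_d(j)})$ for $j\neq i$ and $a_i\sim\pi'_i(\cdot|s,a_{N_d(i)})$ (using the fixed components and previously drawn ones); $\mathbb{E}_{\pi_{-N_d(i)}}$ is the same with $\pi'_i=\pi_i$. $G_d$-locally optimal: $\pi$ associated with $G_d$ is $G_d$-locally optimal if for all $i\in\mathcal{N}$, $s\in\mathcal{S}$, $a_{N_d(i)}\in\mathcal{A}_{N_d(i)}$: $\mathbb{E}_{\pi_{-N_d(i)}}[Q^{\pi}(s,a)]=\max_{\pi'_i(\cdot|s,a_{N_d(i)})}\mathbb{E}_{\pi'_i,\pi_{-N_d[i]}}[Q^{\pi}(s,a)]$, the maximum being over distributions on $\mathcal{A}_i$. *)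

theory Defs
  imports "HOL-Analysis.Analysis"
begin

(* Agents are 0,...,n-1 (agent k here = agent k+1 of the paper).
   A i : finite action set of agent i.  Joint actions: extensional functions on {..<n}. *)

definition joint_actions :: "nat \<Rightarrow> (nat \<Rightarrow> 'b set) \<Rightarrow> (nat \<Rightarrow> 'b) set" where
  "joint_actions n A = PiE {..<n} A"

definition is_distrib :: "'b set \<Rightarrow> ('b \<Rightarrow> real) \<Rightarrow> bool" where
  "is_distrib B p \<longleftrightarrow> (\<forall>b\<in>B. 0 \<le> p b) \<and> sum p B = 1"

definition markov_game ::
  "nat \<Rightarrow> (nat \<Rightarrow> 'b set) \<Rightarrow> ('s::finite \<Rightarrow> (nat \<Rightarrow> 'b) \<Rightarrow> 's \<Rightarrow> real) \<Rightarrow> real \<Rightarrow> bool" where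
  "markov_game n A P \<gamma> \<longleftrightarrow>
     (\<forall>i<n. finite (A i) \<and> A i \<noteq> {}) \<and>
     (\<forall>s. \<forall>a\<in>joint_actions n A. is_distrib UNIV (P s a)) \<and>
     0 \<le> \<gamma> \<and> \<gamma> < 1"

(* Action dependency graph: Ed is a set of directed edges (j,i), meaning j \<rightarrow> i;
   agents are indexed in a topological order (j < i), which makes Ed acyclic. *)
definition adg :: "nat \<Rightarrow> (nat \<times> nat) set \<Rightarrow> bool" where
  "adg n Ed \<longleftrightarrow> (\<forall>(j,i)\<in>Ed. j < i \<and> i < n)"

definition Nd :: "(nat \<times> nat) set \<Rightarrow> nat \<Rightarrow> nat set" where
  "Nd Ed i = {j. (j, i) \<in> Ed}"

(* Individual policies: pol i s x b = \<pi>_i(b | s, x) where x is the partial action a_{N_d(i)},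
   represented as an extensional function on N_d(i). *)
definition policy_assoc ::
  "nat \<Rightarrow> (nat \<Rightarrow> 'b set) \<Rightarrow> (nat \<times> nat) set \<Rightarrow> (nat \<Rightarrow> 's \<Rightarrow> (nat \<Rightarrow> 'b) \<Rightarrow> 'b \<Rightarrow> real) \<Rightarrow> bool" where
  "policy_assoc n A Ed pol \<longleftrightarrow>
     (\<forall>i<n. \<forall>s. \<forall>x\<in>PiE (Nd Ed i) A. is_distrib (A i) (pol i s x))"

definition joint_pol ::
  "nat \<Rightarrow> (nat \<times> nat) set \<Rightarrow> (nat \<Rightarrow> 's \<Rightarrow> (nat \<Rightarrow> 'b) \<Rightarrow> 'b \<Rightarrow> real) \<Rightarrow> 's \<Rightarrow> (nat \<Rightarrow> 'b) \<Rightarrow> real" where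
  "joint_pol n Ed pol s a = (\<Prod>j<n. pol j s (restrict a (Nd Ed j)) (a j))"

fun state_dist ::
  "nat \<Rightarrow> (nat \<Rightarrow> 'b set) \<Rightarrow> ('s::finite \<Rightarrow> (nat \<Rightarrow> 'b) \<Rightarrow> 's \<Rightarrow> real) \<Rightarrow>
   ('s \<Rightarrow> (nat \<Rightarrow> 'b) \<Rightarrow> real) \<Rightarrow> 's \<Rightarrow> nat \<Rightarrow> 's \<Rightarrow> real" where
  "state_dist n A P \<pi> s0 0 s = (if s = s0 then 1 else 0)"
| "state_dist n A P \<pi> s0 (Suc t) s' =
     (\<Sum>s\<in>UNIV. state_dist n A P \<pi> s0 t s * (\<Sum>a\<in>joint_actions n A. \<pi> s a * P s a s'))"

(* V^\<pi>(s0) = E[\<Sum>_t \<gamma>^t r(s^t,a^t)] = \<Sum>_t \<gamma>^t E[r(s^t,a^t)] *)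
definition Vpi ::
  "nat \<Rightarrow> (nat \<Rightarrow> 'b set) \<Rightarrow> ('s::finite \<Rightarrow> (nat \<Rightarrow> 'b) \<Rightarrow> 's \<Rightarrow> real) \<Rightarrow>
   ('s \<Rightarrow> (nat \<Rightarrow> 'b) \<Rightarrow> real) \<Rightarrow> real \<Rightarrow> ('s \<Rightarrow> (nat \<Rightarrow> 'b) \<Rightarrow> real) \<Rightarrow> 's \<Rightarrow> real" where
  "Vpi n A P r \<gamma> \<pi> s0 =
     (\<Sum>t. \<gamma> ^ t * (\<Sum>s\<in>UNIV. state_dist n A P \<pi> s0 t s *
                        (\<Sum>a\<in>joint_actions n A. \<pi> s a * r s a)))"

(* Q^\<pi>(s,a): same expectation conditioned on a^0 = a *)
definition Qpi ::
  "nat \<Rightarrow> (nat \<Rightarrow> 'b set) \<Rightarrow> ('s::finite \<Rightarrow> (nat \<Rightarrow> 'b) \<Rightarrow> 's \<Rightarrow> real) \<Rightarrow>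
   ('s \<Rightarrow> (nat \<Rightarrow> 'b) \<Rightarrow> real) \<Rightarrow> real \<Rightarrow> ('s \<Rightarrow> (nat \<Rightarrow> 'b) \<Rightarrow> real) \<Rightarrow> 's \<Rightarrow> (nat \<Rightarrow> 'b) \<Rightarrow> real" where
  "Qpi n A P r \<gamma> \<pi> s a = r s a + \<gamma> * (\<Sum>s'\<in>UNIV. P s a s' * Vpi n A P r \<gamma> \<pi> s')"

definition bellman_opt ::
  "nat \<Rightarrow> (nat \<Rightarrow> 'b set) \<Rightarrow> ('s::finite \<Rightarrow> (nat \<Rightarrow> 'b) \<Rightarrow> 's \<Rightarrow> real) \<Rightarrow>
   ('s \<Rightarrow> (nat \<Rightarrow> 'b) \<Rightarrow> real) \<Rightarrow> real \<Rightarrow> ('s \<Rightarrow> real) \<Rightarrow> 's \<Rightarrow> real" where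
  "bellman_opt n A P r \<gamma> V s =
     Max ((\<lambda>a. r s a + \<gamma> * (\<Sum>s'\<in>UNIV. P s a s' * V s')) ` joint_actions n A)"

definition Vstar ::
  "nat \<Rightarrow> (nat \<Rightarrow> 'b set) \<Rightarrow> ('s::finite \<Rightarrow> (nat \<Rightarrow> 'b) \<Rightarrow> 's \<Rightarrow> real) \<Rightarrow>
   ('s \<Rightarrow> (nat \<Rightarrow> 'b) \<Rightarrow> real) \<Rightarrow> real \<Rightarrow> 's \<Rightarrow> real" where
  "Vstar n A P r \<gamma> = (THE V. \<forall>s. V s = bellman_opt n A P r \<gamma> V s)"

(* E_{\<pi>'_i, \<pi>_{-N_d[i]}}[f(a)] for fixed s and fixed partial action x = a_{N_d(i)},
   where agent i uses the distribution q and agents j \<notin> N_d[i] use \<pi>_j. *)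
definition exp_dev ::
  "nat \<Rightarrow> (nat \<Rightarrow> 'b set) \<Rightarrow> (nat \<times> nat) set \<Rightarrow> (nat \<Rightarrow> 's \<Rightarrow> (nat \<Rightarrow> 'b) \<Rightarrow> 'b \<Rightarrow> real) \<Rightarrow>
   's \<Rightarrow> nat \<Rightarrow> (nat \<Rightarrow> 'b) \<Rightarrow> ('b \<Rightarrow> real) \<Rightarrow> ((nat \<Rightarrow> 'b) \<Rightarrow> real) \<Rightarrow> real" where
  "exp_dev n A Ed pol s i x q f =
     (\<Sum>a\<in>{a\<in>joint_actions n A. \<forall>j\<in>Nd Ed i. a j = x j}.
        (q (a i) * (\<Prod>j\<in>{..<n} - Nd Ed i - {i}. pol j s (restrict a (Nd Ed j)) (a j))) * f a)"

definition locally_optimal ::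
  "nat \<Rightarrow> (nat \<Rightarrow> 'b set) \<Rightarrow> (nat \<times> nat) set \<Rightarrow> (nat \<Rightarrow> 's \<Rightarrow> (nat \<Rightarrow> 'b) \<Rightarrow> 'b \<Rightarrow> real) \<Rightarrow>
   ('s \<Rightarrow> (nat \<Rightarrow> 'b) \<Rightarrow> real) \<Rightarrow> bool" where
  "locally_optimal n A Ed pol Q \<longleftrightarrow>
     (\<forall>i<n. \<forall>s. \<forall>x\<in>PiE (Nd Ed i) A.
        exp_dev n A Ed pol s i x (pol i s x) (Q s) =
        (SUP q\<in>{q. is_distrib (A i) q}. exp_dev n A Ed pol s i x q (Q s)))"

(* Undirected graph on {..<n}: Ec is a set of pairs without self loops; the edge {i,j}
   may be listed as (i,j) or (j,i). *)
definition ugraph :: "nat \<Rightarrow> (nat \<times> nat) set \<Rightarrow> bool" where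
  "ugraph n Ec \<longleftrightarrow> (\<forall>(i,j)\<in>Ec. i \<noteq> j \<and> i < n \<and> j < n)"

definition Nc :: "(nat \<times> nat) set \<Rightarrow> nat \<Rightarrow> nat set" where
  "Nc Ec i = {j. (i, j) \<in> Ec \<or> (j, i) \<in> Ec}"

definition Nc_set :: "(nat \<times> nat) set \<Rightarrow> nat set \<Rightarrow> nat set" where
  "Nc_set Ec S = (\<Union>i\<in>S. Nc Ec i) - S"

definition is_coord_graph ::
  "nat \<Rightarrow> (nat \<Rightarrow> 'b set) \<Rightarrow> (nat \<times> nat) set \<Rightarrow> ('s \<Rightarrow> (nat \<Rightarrow> 'b) \<Rightarrow> real) \<Rightarrow> bool" where
  "is_coord_graph n A Ec Q \<longleftrightarrow>
     (\<exists>Qi :: nat \<Rightarrow> 's \<Rightarrow> 'b \<Rightarrow> real. \<exists>Qij :: nat \<Rightarrow> nat \<Rightarrow> 's \<Rightarrow> 'b \<Rightarrow> 'b \<Rightarrow> real.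
       \<forall>s. \<forall>a\<in>joint_actions n A.
         Q s a = (\<Sum>i<n. Qi i s (a i)) + (\<Sum>(i,j)\<in>Ec. Qij i j s (a i) (a j)))"

end

theory Submission
  imports Defs
begin

(* V^pi(s) is the pi-average of Q^pi(s, .).  So pi is optimal as soon as this average equals
   max_a Q^pi(s, a) at every state: then V^pi is a fixed point of the Bellman optimality
   operator, a gamma-contraction whose only fixed point is V^*.

   Fix s, charge every edge term of the coordination-graph decomposition of Q^pi(s, .) to its
   later endpoint, and let v_i(a) be the expected sum of the terms charged to agents i, ..., n
   when these agents follow pi after a_1, ..., a_(i-1).  Because N_d(i) = N_c(i^[+]), v_i
   depends on a only through a_(N_d(i)).  Hence the only part of agent i's deviation payoff
   that depends on the deviation is the average of the action values
   h_i(c) = (terms charged to i) + v_(i+1), and local optimality gives v_i >= h_i(c) for every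
   action c.  Backward induction then yields v_1(a) >= Q^pi(s, a) for every joint action a. *)

section \<open>Sequential expectations\<close>

definition nonanticipating :: "(nat \<Rightarrow> (nat \<Rightarrow> 'b) \<Rightarrow> 'b \<Rightarrow> real) \<Rightarrow> nat \<Rightarrow> bool" where
  "nonanticipating g k \<longleftrightarrow> (\<forall>a a'. (\<forall>j<k. a j = a' j) \<longrightarrow> g k a = g k a')"

(* The agents k \<in> K draw their actions in increasing order of k from g k, the other actions are
   frozen to those of a.  For nonanticipating kernels, evaluating g k at the final joint action
   instead of the partial one makes no difference. *)
definition seq_expect ::
  "(nat \<Rightarrow> 'b set) \<Rightarrow> nat set \<Rightarrow> (nat \<Rightarrow> (nat \<Rightarrow> 'b) \<Rightarrow> 'b \<Rightarrow> real) \<Rightarrow>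
   ((nat \<Rightarrow> 'b) \<Rightarrow> real) \<Rightarrow> (nat \<Rightarrow> 'b) \<Rightarrow> real" where
  "seq_expect A K g f a =
     (\<Sum>b\<in>PiE K A. (\<Prod>k\<in>K. g k (override_on a b K) (b k)) * f (override_on a b K))"

lemma sum_PiE_insert:
  assumes "m \<notin> K"
  shows "(\<Sum>b\<in>PiE (insert m K) A. h b) = (\<Sum>c\<in>A m. \<Sum>b\<in>PiE K A. h (b(m := c)))"
proof -
  have "(\<Sum>b\<in>PiE (insert m K) A. h b) = (\<Sum>(c, b)\<in>A m \<times> PiE K A. h (b(m := c)))"
    unfolding PiE_insert_eq using inj_combinator[OF assms, of A]
    by (simp add: sum.reindex case_prod_unfold)
  then show ?thesis
    by (simp add: sum.cartesian_product)
qed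

lemma seq_expect_empty [simp]: "seq_expect A {} g f a = f a"
  by (simp add: seq_expect_def)

lemma seq_expect_insert_min:
  assumes "finite K" "m \<notin> K" "\<forall>k\<in>K. m < k" "nonanticipating g m"
  shows "seq_expect A (insert m K) g f a = (\<Sum>c\<in>A m. g m a c * seq_expect A K g f (a(m := c)))"
proof -
  have override: "override_on a (b(m := c)) (insert m K) = override_on (a(m := c)) b K" for b c
    using assms(2) by (auto simp: override_on_def)
  have "g m (override_on (a(m := c)) b K) = g m a" for b c
  proof -
    have "\<forall>j<m. override_on (a(m := c)) b K j = a j"
      using assms(3) by (auto simp: override_on_def)
    then show ?thesis
      using assms(4) unfolding nonanticipating_def by blast
  qed
  moreover have "(\<Prod>k\<in>K. g k x ((b(m := c)) k)) = (\<Prod>k\<in>K. g k x (b k))" for x b c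
    using assms(2) by (intro prod.cong) auto
  ultimately show ?thesis
    using assms(1,2)
    by (simp add: seq_expect_def sum_PiE_insert override sum_distrib_left mult.assoc)
qed

lemma seq_expect_cong:
  assumes "\<And>b. b \<in> PiE K A \<Longrightarrow> f (override_on a b K) = f' (override_on a' b K)"
    and "\<And>k b. k \<in> K \<Longrightarrow> b \<in> PiE K A \<Longrightarrow> g k (override_on a b K) = g' k (override_on a' b K)"
  shows "seq_expect A K g f a = seq_expect A K g' f' a'"
  unfolding seq_expect_def using assms by (auto intro!: sum.cong prod.cong)

lemma seq_expect_add:
  "seq_expect A K g (\<lambda>x. f1 x + f2 x) a = seq_expect A K g f1 a + seq_expect A K g f2 a"
  unfolding seq_expect_def by (simp add: distrib_left sum.distrib)

lemma seq_expect_const: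
  assumes "finite K" "K \<subseteq> I" "a \<in> PiE I A"
    and "\<And>k. k \<in> K \<Longrightarrow> nonanticipating g k"
    and "\<And>k a'. k \<in> K \<Longrightarrow> a' \<in> PiE I A \<Longrightarrow> is_distrib (A k) (g k a')"
  shows "seq_expect A K g (\<lambda>_. c) a = c"
  using assms
proof (induction K arbitrary: a rule: finite_linorder_min_induct)
  case (insert m K)
  have IH: "seq_expect A K g (\<lambda>_. c) (a(m := x)) = c" if "x \<in> A m" for x
    using insert that PiE_fun_upd[of x A m a I] by (intro insert.IH) (auto simp: insert_absorb)
  have "seq_expect A (insert m K) g (\<lambda>_. c) a
      = (\<Sum>x\<in>A m. g m a x * seq_expect A K g (\<lambda>_. c) (a(m := x)))"
    by (rule seq_expect_insert_min) (use insert in auto)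
  also have "\<dots> = (\<Sum>x\<in>A m. g m a x) * c"
    unfolding sum_distrib_right by (rule sum.cong) (simp_all add: IH)
  also have "(\<Sum>x\<in>A m. g m a x) = 1"
    using insert.prems(4)[of m a] insert.prems(2) by (simp add: is_distrib_def)
  finally show ?case
    by (simp only: mult_1_left)
qed simp

lemma seq_expect_Un:
  assumes "finite K1" "finite K2" "\<forall>k1\<in>K1. \<forall>k2\<in>K2. k1 < k2"
    and "\<And>k. k \<in> K1 \<Longrightarrow> nonanticipating g k"
  shows "seq_expect A (K1 \<union> K2) g f a = seq_expect A K1 g (seq_expect A K2 g f) a"
  using assms
proof (induction K1 arbitrary: a rule: finite_linorder_min_induct)
  case (insert m K1)
  have "seq_expect A (insert m (K1 \<union> K2)) g f a
      = (\<Sum>c\<in>A m. g m a c * seq_expect A (K1 \<union> K2) g f (a(m := c)))"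
    by (rule seq_expect_insert_min) (use insert in auto)
  also have "\<dots> = (\<Sum>c\<in>A m. g m a c * seq_expect A K1 g (seq_expect A K2 g f) (a(m := c)))"
    using insert.IH insert.prems by simp
  also have "\<dots> = seq_expect A (insert m K1) g (seq_expect A K2 g f) a"
    by (rule seq_expect_insert_min[symmetric]) (use insert in auto)
  finally show ?case
    by simp
qed simp

lemma sum_PiE_override_on:
  assumes "K \<subseteq> I" "a \<in> PiE I A"
  shows "(\<Sum>a'\<in>{a'\<in>PiE I A. \<forall>j\<in>I - K. a' j = a j}. h a') = (\<Sum>b\<in>PiE K A. h (override_on a b K))"
proof (rule sum.reindex_bij_witness[of _ "\<lambda>b. override_on a b K" "\<lambda>a'. restrict a' K"])
  fix a' assume a': "a' \<in> {a'\<in>PiE I A. \<forall>j\<in>I - K. a' j = a j}"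
  show "override_on a (restrict a' K) K = a'"
  proof
    fix j
    show "override_on a (restrict a' K) K j = a' j"
      using a' assms by (cases "j \<in> K"; cases "j \<in> I") (auto simp: PiE_def extensional_def)
  qed
  then show "h (override_on a (restrict a' K) K) = h a'"
    by simp
  show "restrict a' K \<in> PiE K A"
    using a' assms(1) by auto
next
  fix b assume b: "b \<in> PiE K A"
  show "restrict (override_on a b K) K = b"
    using b by (auto simp: PiE_def extensional_def)
  show "override_on a b K \<in> {a'\<in>PiE I A. \<forall>j\<in>I - K. a' j = a j}"
    using b assms by (auto simp: PiE_iff extensional_def override_on_def)
qed

lemma override_on_extensional: "a \<in> extensional I \<Longrightarrow> b \<in> extensional I \<Longrightarrow> override_on a b I = b"
  by (auto simp: override_on_def extensional_def)

lemma expectation_le_Max: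
  fixes h :: "'c \<Rightarrow> real"
  assumes "finite B" "B \<noteq> {}" "is_distrib B p"
  shows "(\<Sum>x\<in>B. p x * h x) \<le> Max (h ` B)"
proof -
  have "(\<Sum>x\<in>B. p x * h x) \<le> (\<Sum>x\<in>B. p x * Max (h ` B))"
    using assms by (intro sum_mono mult_left_mono) (auto simp: is_distrib_def)
  also have "\<dots> = Max (h ` B)"
    using assms(3) by (simp add: is_distrib_def flip: sum_distrib_right)
  finally show ?thesis .
qed

lemma point_le_maximal_expectation:
  fixes h :: "'c \<Rightarrow> real"
  assumes "finite B" "c \<in> B" "is_distrib B p"
    and "C + (\<Sum>x\<in>B. p x * h x) = (SUP q\<in>{q. is_distrib B q}. C + (\<Sum>x\<in>B. q x * h x))"
  shows "h c \<le> (\<Sum>x\<in>B. p x * h x)"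
proof -
  have "C + (\<Sum>x\<in>B. q x * h x) \<le> C + (\<Sum>x\<in>B. \<bar>h x\<bar>)" if q: "is_distrib B q" for q
  proof -
    have "q x * h x \<le> \<bar>h x\<bar>" if "x \<in> B" for x
    proof -
      have "0 \<le> q x" "q x \<le> 1"
        using q assms(1) member_le_sum[OF that, of q] that by (auto simp: is_distrib_def)
      then have "q x * h x \<le> q x * \<bar>h x\<bar>"
        by (intro mult_left_mono) auto
      also have "\<dots> \<le> \<bar>h x\<bar>"
        using \<open>0 \<le> q x\<close> \<open>q x \<le> 1\<close> by (intro mult_left_le_one_le) auto
      finally show ?thesis .
    qed
    then show ?thesis
      by (simp add: sum_mono)
  qed
  then have bdd: "bdd_above ((\<lambda>q. C + (\<Sum>x\<in>B. q x * h x)) ` {q. is_distrib B q})"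
    by (intro bdd_aboveI2[where M = "C + (\<Sum>x\<in>B. \<bar>h x\<bar>)"]) auto
  define \<delta> where "\<delta> x = (if x = c then 1 else 0 :: real)" for x
  have distrib_\<delta>: "is_distrib B \<delta>"
    using assms(1,2) by (simp add: is_distrib_def \<delta>_def)
  have "(\<Sum>x\<in>B. \<delta> x * h x) = (\<Sum>x\<in>B. if x = c then h x else 0)"
    by (rule sum.cong) (simp_all add: \<delta>_def)
  then have expect_\<delta>: "(\<Sum>x\<in>B. \<delta> x * h x) = h c"
    using assms(1,2) by simp
  have "C + (\<Sum>x\<in>B. \<delta> x * h x) \<le> (SUP q\<in>{q. is_distrib B q}. C + (\<Sum>x\<in>B. q x * h x))"
    by (rule cSUP_upper[OF _ bdd]) (use distrib_\<delta> in simp)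
  then show ?thesis
    using assms(4) expect_\<delta> by linarith
qed

section \<open>Policy evaluation and Bellman optimality\<close>

definition state_kernel ::
  "nat \<Rightarrow> (nat \<Rightarrow> 'b set) \<Rightarrow> ('s \<Rightarrow> (nat \<Rightarrow> 'b) \<Rightarrow> 's \<Rightarrow> real) \<Rightarrow>
   ('s \<Rightarrow> (nat \<Rightarrow> 'b) \<Rightarrow> real) \<Rightarrow> 's \<Rightarrow> 's \<Rightarrow> real" where
  "state_kernel n A P \<pi> s s' = (\<Sum>a\<in>joint_actions n A. \<pi> s a * P s a s')"

lemma state_dist_Suc_kernel:
  "state_dist n A P \<pi> s0 (Suc t) s' = (\<Sum>s\<in>UNIV. state_dist n A P \<pi> s0 t s * state_kernel n A P \<pi> s s')"
  by (simp add: state_kernel_def)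

lemma state_dist_Suc_first_step:
  "state_dist n A P \<pi> s0 (Suc t) s = (\<Sum>s1\<in>UNIV. state_kernel n A P \<pi> s0 s1 * state_dist n A P \<pi> s1 t s)"
proof (induction t arbitrary: s)
  case 0
  show ?case
    by (simp add: state_kernel_def if_distrib[where f = "\<lambda>x. x * _"]
                  if_distrib[where f = "\<lambda>x. _ * x"] cong: if_cong)
next
  case (Suc t)
  have "state_dist n A P \<pi> s0 (Suc (Suc t)) s
      = (\<Sum>s'\<in>UNIV. (\<Sum>s1\<in>UNIV. state_kernel n A P \<pi> s0 s1 * state_dist n A P \<pi> s1 t s')
                       * state_kernel n A P \<pi> s' s)"
    by (simp only: state_dist_Suc_kernel[of _ _ _ _ _ "Suc t"] Suc)
  also have "\<dots> = (\<Sum>s1\<in>UNIV. state_kernel n A P \<pi> s0 s1 *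
                      (\<Sum>s'\<in>UNIV. state_dist n A P \<pi> s1 t s' * state_kernel n A P \<pi> s' s))"
    unfolding sum_distrib_right sum_distrib_left mult.assoc by (rule sum.swap)
  finally show ?case
    by (simp only: state_dist_Suc_kernel)
qed

lemma is_distrib_state_kernel:
  assumes "markov_game n A P \<gamma>" "\<And>s. is_distrib (joint_actions n A) (\<pi> s)"
  shows "is_distrib UNIV (state_kernel n A P \<pi> s)"
proof -
  have P: "is_distrib UNIV (P s a)" if "a \<in> joint_actions n A" for a
    using assms(1) that by (simp add: markov_game_def)
  have "(\<Sum>s'\<in>UNIV. state_kernel n A P \<pi> s s') = (\<Sum>a\<in>joint_actions n A. \<pi> s a * (\<Sum>s'\<in>UNIV. P s a s'))"
    unfolding state_kernel_def sum_distrib_left by (rule sum.swap)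
  also have "\<dots> = 1"
    using assms(2)[of s] P by (simp add: is_distrib_def)
  finally show ?thesis
    using assms(2)[of s] P by (auto simp: is_distrib_def state_kernel_def intro!: sum_nonneg)
qed

lemma is_distrib_state_dist:
  assumes "\<And>s. is_distrib UNIV (state_kernel n A P \<pi> s)"
  shows "is_distrib UNIV (state_dist n A P \<pi> s0 t)"
proof (induction t)
  case (Suc t)
  have "(\<Sum>s'\<in>UNIV. state_dist n A P \<pi> s0 (Suc t) s')
      = (\<Sum>s\<in>UNIV. state_dist n A P \<pi> s0 t s * (\<Sum>s'\<in>UNIV. state_kernel n A P \<pi> s s'))"
    unfolding state_dist_Suc_kernel sum_distrib_left by (rule sum.swap)
  then show ?case
    using Suc assms unfolding is_distrib_def state_dist_Suc_kernel
    by (simp del: state_dist.simps add: sum_nonneg)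
qed (simp add: is_distrib_def)

lemma summable_discounted_expectation:
  fixes d :: "nat \<Rightarrow> 's::finite \<Rightarrow> real"
  assumes "\<And>t. is_distrib UNIV (d t)" "0 \<le> \<gamma>" "\<gamma> < 1"
  shows "summable (\<lambda>t. \<gamma> ^ t * (\<Sum>s\<in>UNIV. d t s * R s))"
proof (rule summable_comparison_test')
  show "summable (\<lambda>t. (\<Sum>s\<in>UNIV. \<bar>R s\<bar>) * \<gamma> ^ t)"
    using assms(2,3) by (intro summable_mult summable_geometric) simp
  fix t
  have "\<bar>\<Sum>s\<in>UNIV. d t s * R s\<bar> \<le> (\<Sum>s\<in>UNIV. \<bar>R s\<bar>)"
  proof (rule order_trans[OF sum_abs sum_mono])
    fix s
    have "0 \<le> d t s" "d t s \<le> 1"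
      using assms(1)[of t] member_le_sum[of s UNIV "d t"] by (auto simp: is_distrib_def)
    then show "\<bar>d t s * R s\<bar> \<le> \<bar>R s\<bar>"
      by (simp add: abs_mult mult_left_le_one_le)
  qed
  then show "norm (\<gamma> ^ t * (\<Sum>s\<in>UNIV. d t s * R s)) \<le> (\<Sum>s\<in>UNIV. \<bar>R s\<bar>) * \<gamma> ^ t"
    using assms(2) by (simp add: abs_mult mult.commute mult_left_mono)
qed

lemma Vpi_policy_equation:
  fixes P :: "'s::finite \<Rightarrow> (nat \<Rightarrow> 'b) \<Rightarrow> 's \<Rightarrow> real"
  assumes "markov_game n A P \<gamma>" "\<And>s. is_distrib (joint_actions n A) (\<pi> s)"
  shows "Vpi n A P r \<gamma> \<pi> s0 = (\<Sum>a\<in>joint_actions n A. \<pi> s0 a * r s0 a)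
           + \<gamma> * (\<Sum>s1\<in>UNIV. state_kernel n A P \<pi> s0 s1 * Vpi n A P r \<gamma> \<pi> s1)"
proof -
  define R where "R s = (\<Sum>a\<in>joint_actions n A. \<pi> s a * r s a)" for s
  define e where "e s t = (\<Sum>s'\<in>UNIV. state_dist n A P \<pi> s t s' * R s')" for s t
  define K where "K = state_kernel n A P \<pi>"
  have V: "Vpi n A P r \<gamma> \<pi> s = (\<Sum>t. \<gamma> ^ t * e s t)" for s
    by (simp add: Vpi_def e_def R_def)
  have "is_distrib UNIV (state_kernel n A P \<pi> s)" for s
    using is_distrib_state_kernel[OF assms] .
  then have summable: "summable (\<lambda>t. \<gamma> ^ t * e s t)" for s
    unfolding e_def using assms(1)
    by (intro summable_discounted_expectation is_distrib_state_dist) (auto simp: markov_game_def)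
  have e_0: "e s0 0 = R s0"
    by (simp add: e_def if_distrib[where f = "\<lambda>x. x * _"] cong: if_cong)
  have e_Suc: "e s0 (Suc t) = (\<Sum>s1\<in>UNIV. K s0 s1 * e s1 t)" for t
    unfolding e_def K_def state_dist_Suc_first_step sum_distrib_right sum_distrib_left mult.assoc
    by (rule sum.swap)
  have shifted: "\<gamma> ^ t * e s0 (Suc t) = (\<Sum>s1\<in>UNIV. K s0 s1 * (\<gamma> ^ t * e s1 t))" for t
    by (simp add: e_Suc sum_distrib_left mult.left_commute)
  have "(\<Sum>t. \<gamma> ^ t * e s0 t) = e s0 0 + (\<Sum>t. \<gamma> * (\<gamma> ^ t * e s0 (Suc t)))"
    using suminf_split_head[OF summable[of s0]] by (simp add: mult.assoc)
  also have "(\<Sum>t. \<gamma> * (\<gamma> ^ t * e s0 (Suc t))) = \<gamma> * (\<Sum>t. \<Sum>s1\<in>UNIV. K s0 s1 * (\<gamma> ^ t * e s1 t))"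
    unfolding shifted by (intro suminf_mult summable_sum summable_mult summable)
  also have "(\<Sum>t. \<Sum>s1\<in>UNIV. K s0 s1 * (\<gamma> ^ t * e s1 t)) = (\<Sum>s1\<in>UNIV. K s0 s1 * (\<Sum>t. \<gamma> ^ t * e s1 t))"
    by (simp add: suminf_sum suminf_mult summable summable_mult)
  finally show ?thesis
    by (simp add: V e_0 R_def K_def)
qed

lemma Vpi_eq_expected_Qpi:
  fixes P :: "'s::finite \<Rightarrow> (nat \<Rightarrow> 'b) \<Rightarrow> 's \<Rightarrow> real"
  assumes "markov_game n A P \<gamma>" "\<And>s. is_distrib (joint_actions n A) (\<pi> s)"
  shows "Vpi n A P r \<gamma> \<pi> s = (\<Sum>a\<in>joint_actions n A. \<pi> s a * Qpi n A P r \<gamma> \<pi> s a)"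
proof -
  let ?V = "Vpi n A P r \<gamma> \<pi>"
  have "?V s = (\<Sum>a\<in>joint_actions n A. \<pi> s a * r s a)
      + \<gamma> * (\<Sum>s'\<in>UNIV. state_kernel n A P \<pi> s s' * ?V s')"
    by (rule Vpi_policy_equation[OF assms])
  also have "(\<Sum>s'\<in>UNIV. state_kernel n A P \<pi> s s' * ?V s')
      = (\<Sum>a\<in>joint_actions n A. \<pi> s a * (\<Sum>s'\<in>UNIV. P s a s' * ?V s'))"
    unfolding state_kernel_def sum_distrib_left sum_distrib_right mult.assoc by (rule sum.swap)
  also have "(\<Sum>a\<in>joint_actions n A. \<pi> s a * r s a)
      + \<gamma> * (\<Sum>a\<in>joint_actions n A. \<pi> s a * (\<Sum>s'\<in>UNIV. P s a s' * ?V s'))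
      = (\<Sum>a\<in>joint_actions n A. \<pi> s a * r s a + \<gamma> * (\<pi> s a * (\<Sum>s'\<in>UNIV. P s a s' * ?V s')))"
    by (simp only: sum.distrib sum_distrib_left)
  also have "\<dots> = (\<Sum>a\<in>joint_actions n A. \<pi> s a * Qpi n A P r \<gamma> \<pi> s a)"
    by (rule sum.cong) (simp_all add: Qpi_def algebra_simps)
  finally show ?thesis .
qed

lemma abs_Max_image_diff_le:
  fixes f g :: "'a \<Rightarrow> real"
  assumes "finite S" "S \<noteq> {}" "\<And>x. x \<in> S \<Longrightarrow> \<bar>f x - g x\<bar> \<le> c"
  shows "\<bar>Max (f ` S) - Max (g ` S)\<bar> \<le> c"
proof -
  have "Max (h1 ` S) \<le> Max (h2 ` S) + c" if "\<And>x. x \<in> S \<Longrightarrow> h1 x \<le> h2 x + c" for h1 h2 :: "'a \<Rightarrow> real"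
  proof -
    have "Max (h1 ` S) \<in> h1 ` S"
      using assms(1,2) by (intro Max_in) auto
    then obtain x where "x \<in> S" "Max (h1 ` S) = h1 x"
      by auto
    moreover have "h2 x \<le> Max (h2 ` S)"
      using \<open>x \<in> S\<close> assms(1) by (intro Max_ge) auto
    ultimately show ?thesis
      using that[of x] by linarith
  qed
  from this[of f g] this[of g f] show ?thesis
    using assms(3) by (force simp: abs_le_iff)
qed

lemma bellman_opt_contraction:
  fixes P :: "'s::finite \<Rightarrow> (nat \<Rightarrow> 'b) \<Rightarrow> 's \<Rightarrow> real"
  assumes "markov_game n A P \<gamma>" "\<And>s. \<bar>W s - V s\<bar> \<le> \<delta>"
  shows "\<bar>bellman_opt n A P r \<gamma> W s - bellman_opt n A P r \<gamma> V s\<bar> \<le> \<gamma> * \<delta>"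
  unfolding bellman_opt_def
proof (rule abs_Max_image_diff_le)
  show "finite (joint_actions n A)" "joint_actions n A \<noteq> {}"
    using assms(1) by (auto simp: markov_game_def joint_actions_def PiE_eq_empty_iff intro!: finite_PiE)
  fix a assume a: "a \<in> joint_actions n A"
  then have P: "is_distrib UNIV (P s a)" and "0 \<le> \<gamma>"
    using assms(1) by (auto simp: markov_game_def)
  have "\<bar>\<Sum>s'\<in>UNIV. P s a s' * (W s' - V s')\<bar> \<le> (\<Sum>s'\<in>UNIV. P s a s' * \<delta>)"
    using P assms(2) by (intro order_trans[OF sum_abs sum_mono]) (simp add: abs_mult mult_left_mono is_distrib_def)
  also have "\<dots> = \<delta>"
    using P by (simp add: is_distrib_def flip: sum_distrib_right)
  finally have "\<gamma> * \<bar>\<Sum>s'\<in>UNIV. P s a s' * (W s' - V s')\<bar> \<le> \<gamma> * \<delta>"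
    using \<open>0 \<le> \<gamma>\<close> by (rule mult_left_mono)
  moreover have "(r s a + \<gamma> * (\<Sum>s'\<in>UNIV. P s a s' * W s')) - (r s a + \<gamma> * (\<Sum>s'\<in>UNIV. P s a s' * V s'))
      = \<gamma> * (\<Sum>s'\<in>UNIV. P s a s' * (W s' - V s'))"
    by (simp add: right_diff_distrib sum_subtractf)
  ultimately show "\<bar>(r s a + \<gamma> * (\<Sum>s'\<in>UNIV. P s a s' * W s')) - (r s a + \<gamma> * (\<Sum>s'\<in>UNIV. P s a s' * V s'))\<bar>
      \<le> \<gamma> * \<delta>"
    using \<open>0 \<le> \<gamma>\<close> by (simp add: abs_mult)
qed

lemma Vstar_eqI:
  fixes P :: "'s::finite \<Rightarrow> (nat \<Rightarrow> 'b) \<Rightarrow> 's \<Rightarrow> real"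
  assumes "markov_game n A P \<gamma>" "\<And>s. V s = bellman_opt n A P r \<gamma> V s"
  shows "Vstar n A P r \<gamma> = V"
  unfolding Vstar_def
proof (rule the_equality)
  fix W assume W: "\<forall>s. W s = bellman_opt n A P r \<gamma> W s"
  define \<delta> where "\<delta> = Max (range (\<lambda>s. \<bar>W s - V s\<bar>))"
  have \<delta>: "\<bar>W s - V s\<bar> \<le> \<delta>" for s
    by (simp add: \<delta>_def)
  have "\<delta> \<in> range (\<lambda>s. \<bar>W s - V s\<bar>)"
    unfolding \<delta>_def by (intro Max_in) auto
  then obtain s where "\<delta> = \<bar>W s - V s\<bar>"
    by auto
  also have "\<dots> \<le> \<gamma> * \<delta>"
    using bellman_opt_contraction[OF assms(1) \<delta>, where r = r and s = s] spec[OF W, of s] assms(2)[of s] by simp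
  finally have "\<delta> \<le> 0"
    using assms(1) \<delta>[of s] by (auto simp: markov_game_def mult_le_cancel_right1)
  show "W = V"
  proof
    fix x
    show "W x = V x"
      using \<delta>[of x] \<open>\<delta> \<le> 0\<close> by linarith
  qed
qed (use assms(2) in blast)

section \<open>Policies on an action dependency graph\<close>

locale dag_policy =
  fixes n :: nat and A :: "nat \<Rightarrow> 'b set" and Ed :: "(nat \<times> nat) set"
    and pol :: "nat \<Rightarrow> 's \<Rightarrow> (nat \<Rightarrow> 'b) \<Rightarrow> 'b \<Rightarrow> real"
  assumes finite_actions: "\<And>i. i < n \<Longrightarrow> finite (A i)"
    and actions_nonempty: "\<And>i. i < n \<Longrightarrow> A i \<noteq> {}"
    and adg: "adg n Ed"
    and policy_assoc: "policy_assoc n A Ed pol"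
begin

definition policy_kernel :: "'s \<Rightarrow> nat \<Rightarrow> (nat \<Rightarrow> 'b) \<Rightarrow> 'b \<Rightarrow> real" where
  "policy_kernel s k a = pol k s (restrict a (Nd Ed k))"

lemma Nd_less: "j \<in> Nd Ed k \<Longrightarrow> j < k"
  using adg by (auto simp: adg_def Nd_def)

lemma nonanticipating_policy_kernel: "nonanticipating (policy_kernel s) k"
  unfolding nonanticipating_def policy_kernel_def
proof (intro allI impI)
  fix a a' :: "nat \<Rightarrow> 'b"
  assume "\<forall>j<k. a j = a' j"
  then have "restrict a (Nd Ed k) = restrict a' (Nd Ed k)"
    using Nd_less by auto
  then show "(\<lambda>c. pol k s (restrict a (Nd Ed k)) c) = (\<lambda>c. pol k s (restrict a' (Nd Ed k)) c)"
    by simp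
qed

lemma nonanticipating_policy_kernel_upd: "nonanticipating ((policy_kernel s)(i := (\<lambda>_. q))) k"
  using nonanticipating_policy_kernel[of s k] by (simp add: nonanticipating_def)

lemma restrict_Nd_in_PiE:
  assumes "k < n" "a \<in> PiE {..<n} A"
  shows "restrict a (Nd Ed k) \<in> PiE (Nd Ed k) A"
proof -
  have "Nd Ed k \<subseteq> {..<n}"
    using assms(1) Nd_less[of _ k] by fastforce
  then show ?thesis
    using assms(2) by (auto simp: restrict_PiE_iff PiE_iff)
qed

lemma is_distrib_policy_kernel:
  "k < n \<Longrightarrow> a \<in> PiE {..<n} A \<Longrightarrow> is_distrib (A k) (policy_kernel s k a)"
  using restrict_Nd_in_PiE policy_assoc by (simp add: policy_assoc_def policy_kernel_def)

lemma seq_expect_policy_kernel_const: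
  assumes "K \<subseteq> {..<n}" "a \<in> PiE {..<n} A"
  shows "seq_expect A K (policy_kernel s) (\<lambda>_. c) a = c"
  using assms finite_subset[OF assms(1)] nonanticipating_policy_kernel is_distrib_policy_kernel
  by (intro seq_expect_const[where I = "{..<n}"]) auto

lemma seq_expect_policy_kernel_add_const:
  assumes "K \<subseteq> {..<n}" "a \<in> PiE {..<n} A"
  shows "seq_expect A K (policy_kernel s) (\<lambda>x. c + f x) a = c + seq_expect A K (policy_kernel s) f a"
  using seq_expect_policy_kernel_const[OF assms] by (simp add: seq_expect_add)

lemma finite_joint_actions: "finite (PiE {..<n} A)"
  using finite_actions by (intro finite_PiE) auto

lemma joint_actions_nonempty: "PiE {..<n} A \<noteq> {}"
  using actions_nonempty by (simp add: PiE_eq_empty_iff)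

lemma expectation_joint_pol:
  assumes "a \<in> PiE {..<n} A"
  shows "(\<Sum>b\<in>PiE {..<n} A. joint_pol n Ed pol s b * f b) = seq_expect A {..<n} (policy_kernel s) f a"
proof -
  have "override_on a b {..<n} = b" if "b \<in> PiE {..<n} A" for b
    using that assms by (simp add: override_on_extensional PiE_def)
  then show ?thesis
    unfolding seq_expect_def joint_pol_def policy_kernel_def by (intro sum.cong) auto
qed

lemma is_distrib_joint_pol: "is_distrib (joint_actions n A) (joint_pol n Ed pol s)"
proof -
  obtain a where a: "a \<in> PiE {..<n} A"
    using joint_actions_nonempty by blast
  have "(\<Sum>b\<in>PiE {..<n} A. joint_pol n Ed pol s b) = 1"
    using expectation_joint_pol[OF a, of s "\<lambda>_. 1"] seq_expect_policy_kernel_const[OF _ a] by simp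
  moreover have "0 \<le> joint_pol n Ed pol s b" if "b \<in> PiE {..<n} A" for b
    using is_distrib_policy_kernel[OF _ that] that
    unfolding joint_pol_def by (intro prod_nonneg) (auto simp: is_distrib_def policy_kernel_def)
  ultimately show ?thesis
    by (simp add: is_distrib_def joint_actions_def)
qed

lemma exp_dev_eq_seq_expect:
  assumes "i < n" "a \<in> PiE {..<n} A"
  shows "exp_dev n A Ed pol s i (restrict a (Nd Ed i)) q f
           = seq_expect A ({..<n} - Nd Ed i) ((policy_kernel s)(i := (\<lambda>_. q))) f a"
proof -
  define K where "K = {..<n} - Nd Ed i"
  have Nd: "Nd Ed i \<subseteq> {..<i}"
    using Nd_less by auto
  have i: "i \<in> K" and "finite K"
    using assms(1) Nd by (auto simp: K_def)
  have "{a'\<in>joint_actions n A. \<forall>j\<in>Nd Ed i. a' j = restrict a (Nd Ed i) j}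
      = {a'\<in>PiE {..<n} A. \<forall>j\<in>{..<n} - K. a' j = a j}"
    using Nd assms(1) by (auto simp: K_def joint_actions_def)
  then have "exp_dev n A Ed pol s i (restrict a (Nd Ed i)) q f
      = (\<Sum>a'\<in>{a'\<in>PiE {..<n} A. \<forall>j\<in>{..<n} - K. a' j = a j}.
           (q (a' i) * (\<Prod>j\<in>K - {i}. pol j s (restrict a' (Nd Ed j)) (a' j))) * f a')"
    by (simp add: exp_dev_def K_def set_diff_eq)
  also have "\<dots> = (\<Sum>b\<in>PiE K A. (q (b i) *
      (\<Prod>j\<in>K - {i}. pol j s (restrict (override_on a b K) (Nd Ed j)) (b j))) * f (override_on a b K))"
    using assms(2) i by (subst sum_PiE_override_on) (auto simp: K_def intro!: sum.cong prod.cong)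
  also have "\<dots> = seq_expect A K ((policy_kernel s)(i := (\<lambda>_. q))) f a"
    unfolding seq_expect_def
  proof (intro sum.cong refl)
    fix b
    let ?g = "(policy_kernel s)(i := (\<lambda>_. q))"
    have "(\<Prod>k\<in>K. ?g k (override_on a b K) (b k)) = q (b i) * (\<Prod>k\<in>K - {i}. ?g k (override_on a b K) (b k))"
      by (simp only: prod.remove[OF \<open>finite K\<close> i] fun_upd_same)
    also have "(\<Prod>k\<in>K - {i}. ?g k (override_on a b K) (b k))
        = (\<Prod>j\<in>K - {i}. pol j s (restrict (override_on a b K) (Nd Ed j)) (b j))"
      by (intro prod.cong) (auto simp: policy_kernel_def)
    finally show "q (b i) * (\<Prod>j\<in>K - {i}. pol j s (restrict (override_on a b K) (Nd Ed j)) (b j))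
        * f (override_on a b K) = (\<Prod>k\<in>K. ?g k (override_on a b K) (b k)) * f (override_on a b K)"
      by simp
  qed
  finally show ?thesis
    by (simp add: K_def)
qed

end

section \<open>Variable elimination along the coordination graph\<close>

(* Q plays the role of Q^pi(s, .) at the single state s. *)
locale coordinated_dag_policy = dag_policy n A Ed pol
  for n :: nat and A :: "nat \<Rightarrow> 'b set" and Ed :: "(nat \<times> nat) set"
    and pol :: "nat \<Rightarrow> 's \<Rightarrow> (nat \<Rightarrow> 'b) \<Rightarrow> 'b \<Rightarrow> real" +
  fixes Ec :: "(nat \<times> nat) set" and s :: 's and Q :: "(nat \<Rightarrow> 'b) \<Rightarrow> real"
    and Qi :: "nat \<Rightarrow> 'b \<Rightarrow> real" and Qij :: "nat \<Rightarrow> nat \<Rightarrow> 'b \<Rightarrow> 'b \<Rightarrow> real"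
  assumes ugraph: "ugraph n Ec"
    and Nd_eq_Nc_set: "\<And>i. i < n \<Longrightarrow> Nd Ed i = Nc_set Ec {i..<n}"
    and coordination_graph:
      "\<And>a. a \<in> PiE {..<n} A \<Longrightarrow> Q a = (\<Sum>i<n. Qi i (a i)) + (\<Sum>(i, j)\<in>Ec. Qij i j (a i) (a j))"
    and locally_optimal: "\<And>i x. i < n \<Longrightarrow> x \<in> PiE (Nd Ed i) A \<Longrightarrow>
      exp_dev n A Ed pol s i x (pol i s x) Q = (SUP q\<in>{q. is_distrib (A i) q}. exp_dev n A Ed pol s i x q Q)"
begin

(* Every edge term is charged to its later endpoint, so that charged_term k only looks at a k
   and at the earlier neighbours of k. *)
definition charged_term :: "nat \<Rightarrow> (nat \<Rightarrow> 'b) \<Rightarrow> real" where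
  "charged_term k a = Qi k (a k) + (\<Sum>(i, j)\<in>{e\<in>Ec. max (fst e) (snd e) = k}. Qij i j (a i) (a j))"

definition tail_sum :: "nat \<Rightarrow> (nat \<Rightarrow> 'b) \<Rightarrow> real" where
  "tail_sum i a = (\<Sum>k\<in>{i..<n}. charged_term k a)"

definition value_to_go :: "nat \<Rightarrow> (nat \<Rightarrow> 'b) \<Rightarrow> real" where
  "value_to_go i = seq_expect A {i..<n} (policy_kernel s) (tail_sum i)"

definition action_value :: "nat \<Rightarrow> (nat \<Rightarrow> 'b) \<Rightarrow> 'b \<Rightarrow> real" where
  "action_value i a c = charged_term i (a(i := c)) + value_to_go (Suc i) (a(i := c))"

lemma Q_eq_tail_sum:
  assumes "a \<in> PiE {..<n} A"
  shows "Q a = tail_sum 0 a"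
proof -
  have "Ec \<subseteq> {..<n} \<times> {..<n}"
    using ugraph by (auto simp: ugraph_def)
  then have "finite Ec" "(\<lambda>e. max (fst e) (snd e)) ` Ec \<subseteq> {..<n}"
    by (auto intro: finite_subset)
  then have "(\<Sum>k<n. \<Sum>(i, j)\<in>{e\<in>Ec. max (fst e) (snd e) = k}. Qij i j (a i) (a j))
      = (\<Sum>(i, j)\<in>Ec. Qij i j (a i) (a j))"
    by (intro sum.group) auto
  then show ?thesis
    using coordination_graph[OF assms]
    by (simp add: tail_sum_def charged_term_def sum.distrib atLeast0LessThan)
qed

lemma tail_sum_Suc: "i < n \<Longrightarrow> tail_sum i a = charged_term i a + tail_sum (Suc i) a"
  unfolding tail_sum_def by (simp add: sum.atLeast_Suc_lessThan)

lemma tail_sum_0: "i \<le> n \<Longrightarrow> tail_sum 0 a = (\<Sum>k<i. charged_term k a) + tail_sum i a"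
  using sum.atLeastLessThan_concat[of 0 i n "\<lambda>k. charged_term k a"]
  by (simp add: tail_sum_def atLeast0LessThan)

lemma charged_term_cong:
  assumes "\<And>j. j = k \<or> (j \<in> Nc Ec k \<and> j < k) \<Longrightarrow> a j = a' j"
  shows "charged_term k a = charged_term k a'"
proof -
  have "a i = a' i \<and> a j = a' j" if "(i, j) \<in> Ec" "max i j = k" for i j
    using that assms[of i] assms[of j] by (cases "i < j"; cases "j < i") (auto simp: Nc_def max_def)
  then show ?thesis
    unfolding charged_term_def using assms[of k] by (auto intro!: sum.cong)
qed

lemma charged_term_cong_prefix: "(\<And>j. j \<le> k \<Longrightarrow> a j = a' j) \<Longrightarrow> charged_term k a = charged_term k a'"
  by (rule charged_term_cong) auto

lemma value_to_go_cong:
  assumes "\<And>j. j \<in> Nc_set Ec {i..<n} \<Longrightarrow> a j = a' j"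
  shows "value_to_go i a = value_to_go i a'"
  unfolding value_to_go_def
proof (rule seq_expect_cong)
  fix b
  have agree: "override_on a b {i..<n} j = override_on a' b {i..<n} j"
    if "j \<in> {i..<n} \<or> j \<in> Nc_set Ec {i..<n}" for j
    using that assms by (cases "j \<in> {i..<n}") auto
  show "tail_sum i (override_on a b {i..<n}) = tail_sum i (override_on a' b {i..<n})"
    unfolding tail_sum_def by (intro sum.cong refl charged_term_cong agree) (auto simp: Nc_set_def)
  fix k assume k: "k \<in> {i..<n}"
  then have "restrict (override_on a b {i..<n}) (Nd Ed k) = restrict (override_on a' b {i..<n}) (Nd Ed k)"
    by (intro restrict_ext agree) (auto simp: Nd_eq_Nc_set Nc_set_def)
  then show "policy_kernel s k (override_on a b {i..<n}) = policy_kernel s k (override_on a' b {i..<n})"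
    by (simp add: policy_kernel_def)
qed

lemma action_value_cong:
  assumes "i < n" "\<And>j. j \<in> Nd Ed i \<Longrightarrow> a j = a' j"
  shows "action_value i a c = action_value i a' c"
proof -
  have agree: "(a(i := c)) j = (a'(i := c)) j" if "j = i \<or> j \<in> Nc_set Ec {i..<n}" for j
    using that assms by (auto simp: Nd_eq_Nc_set)
  have "charged_term i (a(i := c)) = charged_term i (a'(i := c))"
    using assms(1) by (intro charged_term_cong agree) (auto simp: Nc_set_def)
  moreover have "value_to_go (Suc i) (a(i := c)) = value_to_go (Suc i) (a'(i := c))"
    by (intro value_to_go_cong agree) (auto simp: Nc_set_def)
  ultimately show ?thesis
    by (simp add: action_value_def)
qed

lemma seq_expect_tail_sum:
  assumes "i < n" "a \<in> PiE {..<n} A" "nonanticipating g i" "\<And>k. i < k \<Longrightarrow> g k = policy_kernel s k"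
  shows "seq_expect A {i..<n} g (tail_sum i) a = (\<Sum>c\<in>A i. g i a c * action_value i a c)"
proof -
  have "{i..<n} = insert i {Suc i..<n}"
    using assms(1) by auto
  then have "seq_expect A {i..<n} g (tail_sum i) a
      = (\<Sum>c\<in>A i. g i a c * seq_expect A {Suc i..<n} g (tail_sum i) (a(i := c)))"
    using assms(3) by (simp only:) (rule seq_expect_insert_min; simp)
  also have "\<dots> = (\<Sum>c\<in>A i. g i a c * action_value i a c)"
  proof (intro sum.cong refl arg_cong2[where f = times])
    fix c assume "c \<in> A i"
    then have a_c: "a(i := c) \<in> PiE {..<n} A"
      using assms(1,2) PiE_fun_upd[of c A i a "{..<n}"] by (simp add: insert_absorb)
    have "seq_expect A {Suc i..<n} g (tail_sum i) (a(i := c))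
        = seq_expect A {Suc i..<n} (policy_kernel s) (\<lambda>x. charged_term i (a(i := c)) + tail_sum (Suc i) x) (a(i := c))"
      using assms(1,4) by (intro seq_expect_cong) (auto simp: tail_sum_Suc intro!: charged_term_cong_prefix)
    also have "\<dots> = action_value i a c"
      unfolding action_value_def value_to_go_def
      by (rule seq_expect_policy_kernel_add_const[OF _ a_c]) (simp add: subset_eq)
    finally show "seq_expect A {Suc i..<n} g (tail_sum i) (a(i := c)) = action_value i a c" .
  qed
  finally show ?thesis .
qed

lemma value_to_go_eq:
  "i < n \<Longrightarrow> a \<in> PiE {..<n} A \<Longrightarrow> value_to_go i a = (\<Sum>c\<in>A i. policy_kernel s i a c * action_value i a c)"
  unfolding value_to_go_def by (rule seq_expect_tail_sum) (simp_all add: nonanticipating_policy_kernel)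

lemma seq_expect_deviation:
  assumes "i < n" "a \<in> PiE {..<n} A" "is_distrib (A i) q"
  shows "seq_expect A {i..<n} ((policy_kernel s)(i := (\<lambda>_. q))) Q a
           = (\<Sum>k<i. charged_term k a) + (\<Sum>c\<in>A i. q c * action_value i a c)"
proof -
  let ?g = "(policy_kernel s)(i := (\<lambda>_. q))"
  have nonanticipating: "nonanticipating ?g k" for k
    by (rule nonanticipating_policy_kernel_upd)
  have distrib: "is_distrib (A k) (?g k a')" if "k \<in> {i..<n}" "a' \<in> PiE {..<n} A" for k a'
    using that assms(3) is_distrib_policy_kernel by auto
  have Q_split: "Q (override_on a b {i..<n}) = (\<Sum>k<i. charged_term k a) + tail_sum i (override_on a b {i..<n})"
    if "b \<in> PiE {i..<n} A" for b
  proof -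
    have "override_on a b {i..<n} \<in> PiE {..<n} A"
      using that assms(2) by (auto simp: PiE_iff override_on_def extensional_def)
    moreover have "charged_term k (override_on a b {i..<n}) = charged_term k a" if "k < i" for k
      using that by (intro charged_term_cong_prefix) auto
    ultimately show ?thesis
      using assms(1) by (simp add: Q_eq_tail_sum tail_sum_0[of i])
  qed
  have "seq_expect A {i..<n} ?g Q a
      = seq_expect A {i..<n} ?g (\<lambda>x. (\<Sum>k<i. charged_term k a) + tail_sum i x) a"
    by (rule seq_expect_cong) (simp_all add: Q_split)
  also have "\<dots> = (\<Sum>k<i. charged_term k a) + seq_expect A {i..<n} ?g (tail_sum i) a"
    unfolding seq_expect_add
    by (subst seq_expect_const[where I = "{..<n}"]) (use assms(2) nonanticipating distrib in auto)
  also have "seq_expect A {i..<n} ?g (tail_sum i) a = (\<Sum>c\<in>A i. q c * action_value i a c)"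
    by (subst seq_expect_tail_sum) (use assms(1,2) nonanticipating in auto)
  finally show ?thesis .
qed

lemma exp_dev_eq_average_action_value:
  assumes "i < n" "a \<in> PiE {..<n} A" "is_distrib (A i) q"
  shows "exp_dev n A Ed pol s i (restrict a (Nd Ed i)) q Q
           = seq_expect A ({..<i} - Nd Ed i) (policy_kernel s) (\<lambda>a'. \<Sum>k<i. charged_term k a') a
             + (\<Sum>c\<in>A i. q c * action_value i a c)"
proof -
  let ?g = "(policy_kernel s)(i := (\<lambda>_. q))"
  let ?K = "{..<i} - Nd Ed i"
  have split: "{..<n} - Nd Ed i = ?K \<union> {i..<n}"
    using assms(1) by (auto dest: Nd_less)
  have "exp_dev n A Ed pol s i (restrict a (Nd Ed i)) q Q = seq_expect A ?K ?g (seq_expect A {i..<n} ?g Q) a"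
    unfolding exp_dev_eq_seq_expect[OF assms(1,2)] split
    by (rule seq_expect_Un) (auto simp: nonanticipating_policy_kernel_upd)
  also have "\<dots> = seq_expect A ?K (policy_kernel s)
                     (\<lambda>a'. (\<Sum>c\<in>A i. q c * action_value i a c) + (\<Sum>k<i. charged_term k a')) a"
  proof (rule seq_expect_cong)
    fix b assume "b \<in> PiE ?K A"
    then have a': "override_on a b ?K \<in> PiE {..<n} A"
      using assms(1,2) by (auto simp: PiE_iff override_on_def extensional_def)
    \<comment> \<open>the agents in ?K lie outside N_d(i), which is all that the action values of agent i see\<close>
    have "action_value i (override_on a b ?K) c = action_value i a c" for c
      using assms(1) by (intro action_value_cong) auto
    then show "seq_expect A {i..<n} ?g Q (override_on a b ?K)
        = (\<Sum>c\<in>A i. q c * action_value i a c) + (\<Sum>k<i. charged_term k (override_on a b ?K))"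
      using seq_expect_deviation[OF assms(1) a' assms(3)] by simp
  next
    fix k b assume "k \<in> ?K"
    then show "?g k (override_on a b ?K) = policy_kernel s k (override_on a b ?K)"
      by simp
  qed
  also have "\<dots> = (\<Sum>c\<in>A i. q c * action_value i a c)
                    + seq_expect A ?K (policy_kernel s) (\<lambda>a'. \<Sum>k<i. charged_term k a') a"
    by (rule seq_expect_policy_kernel_add_const[OF _ assms(2)]) (use assms(1) in auto)
  finally show ?thesis
    by simp
qed

lemma action_value_le_value_to_go:
  assumes "i < n" "a \<in> PiE {..<n} A" "c \<in> A i"
  shows "action_value i a c \<le> value_to_go i a"
proof -
  let ?x = "restrict a (Nd Ed i)"
  let ?C = "seq_expect A ({..<i} - Nd Ed i) (policy_kernel s) (\<lambda>a'. \<Sum>k<i. charged_term k a') a"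
  let ?h = "action_value i a"
  have distrib: "is_distrib (A i) (policy_kernel s i a)"
    using assms(1,2) by (rule is_distrib_policy_kernel)
  have "pol i s ?x = policy_kernel s i a"
    by (simp add: policy_kernel_def)
  then have "exp_dev n A Ed pol s i ?x (pol i s ?x) Q = ?C + (\<Sum>c\<in>A i. policy_kernel s i a c * ?h c)"
    using exp_dev_eq_average_action_value[OF assms(1,2) distrib] by simp
  moreover have "exp_dev n A Ed pol s i ?x (pol i s ?x) Q
      = (SUP q\<in>{q. is_distrib (A i) q}. exp_dev n A Ed pol s i ?x q Q)"
    using assms(1) restrict_Nd_in_PiE[OF assms(1,2)] by (rule locally_optimal)
  moreover have "(SUP q\<in>{q. is_distrib (A i) q}. exp_dev n A Ed pol s i ?x q Q)
      = (SUP q\<in>{q. is_distrib (A i) q}. ?C + (\<Sum>c\<in>A i. q c * ?h c))"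
    by (rule SUP_cong) (simp_all add: exp_dev_eq_average_action_value[OF assms(1,2)])
  ultimately have "?C + (\<Sum>c\<in>A i. policy_kernel s i a c * ?h c)
      = (SUP q\<in>{q. is_distrib (A i) q}. ?C + (\<Sum>c\<in>A i. q c * ?h c))"
    by linarith
  with finite_actions[OF assms(1)] assms(3) distrib
  have "?h c \<le> (\<Sum>c\<in>A i. policy_kernel s i a c * ?h c)"
    by (rule point_le_maximal_expectation)
  then show ?thesis
    using value_to_go_eq[OF assms(1,2)] by linarith
qed

lemma tail_sum_le_value_to_go:
  assumes "i \<le> n" "a \<in> PiE {..<n} A" "b \<in> Pi {i..<n} A"
  shows "tail_sum i (override_on a b {i..<n}) \<le> value_to_go i a"
  using assms
proof (induction i arbitrary: a rule: inc_induct)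
  case base
  then show ?case
    by (simp add: tail_sum_def value_to_go_def)
next
  case (step i)
  let ?a = "a(i := b i)"
  have "i < n" "b i \<in> A i" "b \<in> Pi {Suc i..<n} A"
    using step.hyps step.prems(2) by auto
  then have a': "?a \<in> PiE {..<n} A"
    using step.prems(1) PiE_fun_upd[of "b i" A i a "{..<n}"] by (simp add: insert_absorb)
  have "override_on a b {i..<n} = override_on ?a b {Suc i..<n}"
    using \<open>i < n\<close> by (auto simp: override_on_def)
  moreover have "charged_term i (override_on ?a b {Suc i..<n}) = charged_term i ?a"
    by (intro charged_term_cong_prefix) auto
  ultimately have "tail_sum i (override_on a b {i..<n})
      = charged_term i ?a + tail_sum (Suc i) (override_on ?a b {Suc i..<n})"
    using tail_sum_Suc[OF \<open>i < n\<close>] by (simp only:)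
  also have "\<dots> \<le> charged_term i ?a + value_to_go (Suc i) ?a"
    by (rule add_left_mono[OF step.IH[OF a' \<open>b \<in> Pi {Suc i..<n} A\<close>]])
  also have "\<dots> = action_value i a (b i)"
    by (simp add: action_value_def)
  also have "\<dots> \<le> value_to_go i a"
    using \<open>i < n\<close> step.prems(1) \<open>b i \<in> A i\<close> by (rule action_value_le_value_to_go)
  finally show ?case .
qed

lemma expectation_eq_Max:
  "(\<Sum>a\<in>joint_actions n A. joint_pol n Ed pol s a * Q a) = Max (Q ` joint_actions n A)"
proof (rule antisym)
  show "(\<Sum>a\<in>joint_actions n A. joint_pol n Ed pol s a * Q a) \<le> Max (Q ` joint_actions n A)"
    using finite_joint_actions joint_actions_nonempty is_distrib_joint_pol
    by (intro expectation_le_Max) (auto simp: joint_actions_def)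
  obtain a0 where a0: "a0 \<in> PiE {..<n} A"
    using joint_actions_nonempty by blast
  have override: "override_on a0 b {..<n} = b" if "b \<in> PiE {..<n} A" for b
    using a0 that by (intro override_on_extensional) (auto simp: PiE_def)
  have "(\<Sum>a\<in>joint_actions n A. joint_pol n Ed pol s a * Q a) = value_to_go 0 a0"
    unfolding joint_actions_def expectation_joint_pol[OF a0] value_to_go_def atLeast0LessThan
  proof (rule seq_expect_cong)
    fix b assume "b \<in> PiE {..<n} A"
    then show "Q (override_on a0 b {..<n}) = tail_sum 0 (override_on a0 b {..<n})"
      using override[of b] Q_eq_tail_sum[of b] by simp
  qed simp
  moreover have "Q b \<le> value_to_go 0 a0" if b: "b \<in> joint_actions n A" for b
    using a0 b tail_sum_le_value_to_go[of 0 a0 b] override[of b] Q_eq_tail_sum[of b]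
    by (simp add: joint_actions_def PiE_def atLeast0LessThan)
  ultimately show "Max (Q ` joint_actions n A) \<le> (\<Sum>a\<in>joint_actions n A. joint_pol n Ed pol s a * Q a)"
    using finite_joint_actions joint_actions_nonempty by (simp add: joint_actions_def Max_le_iff)
qed

end

theorem theorem1:
  fixes n :: nat and A :: "nat \<Rightarrow> 'b set"
    and P :: "'s::finite \<Rightarrow> (nat \<Rightarrow> 'b) \<Rightarrow> 's \<Rightarrow> real"
    and r :: "'s \<Rightarrow> (nat \<Rightarrow> 'b) \<Rightarrow> real" and \<gamma> :: real
    and Ed Ec :: "(nat \<times> nat) set"
    and pol :: "nat \<Rightarrow> 's \<Rightarrow> (nat \<Rightarrow> 'b) \<Rightarrow> 'b \<Rightarrow> real"
  assumes "markov_game n A P \<gamma>"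
    and "adg n Ed"
    and "policy_assoc n A Ed pol"
    and "locally_optimal n A Ed pol (Qpi n A P r \<gamma> (joint_pol n Ed pol))"
    and "ugraph n Ec"
    and "is_coord_graph n A Ec (Qpi n A P r \<gamma> (joint_pol n Ed pol))"
    and "\<forall>i<n. Nd Ed i = Nc_set Ec {i..<n}"
  shows "\<forall>s. Vpi n A P r \<gamma> (joint_pol n Ed pol) s = Vstar n A P r \<gamma> s"
proof -
  define \<pi> where "\<pi> = joint_pol n Ed pol"
  define Q where "Q = Qpi n A P r \<gamma> \<pi>"
  have policy: "dag_policy n A Ed pol"
    using assms(1-3) by unfold_locales (auto simp: markov_game_def)
  obtain Qi Qij where decomposition: "\<And>s a. a \<in> joint_actions n A \<Longrightarrow>
      Q s a = (\<Sum>i<n. Qi i s (a i)) + (\<Sum>(i, j)\<in>Ec. Qij i j s (a i) (a j))"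
    using assms(6) unfolding is_coord_graph_def Q_def \<pi>_def by blast
  have "Vpi n A P r \<gamma> \<pi> s = bellman_opt n A P r \<gamma> (Vpi n A P r \<gamma> \<pi>) s" for s
  proof -
    interpret coordinated_dag_policy n A Ed pol Ec s "Q s" "\<lambda>i. Qi i s" "\<lambda>i j. Qij i j s"
      using policy assms(4,5,7) decomposition
      by (intro coordinated_dag_policy.intro coordinated_dag_policy_axioms.intro)
         (auto simp: locally_optimal_def joint_actions_def Q_def \<pi>_def)
    have "Vpi n A P r \<gamma> \<pi> s = (\<Sum>a\<in>joint_actions n A. \<pi> s a * Q s a)"
      unfolding Q_def \<pi>_def using assms(1) is_distrib_joint_pol by (rule Vpi_eq_expected_Qpi)
    also have "\<dots> = Max (Q s ` joint_actions n A)"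
      unfolding \<pi>_def by (rule expectation_eq_Max)
    finally show ?thesis
      unfolding bellman_opt_def Q_def Qpi_def .
  qed
  then show ?thesis
    using Vstar_eqI[OF assms(1)] unfolding \<pi>_def by metis
qed

end
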